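(* Let $2\le M_R\le M_T$, $\sigma^2>0$, let $\tilde{\mathbf\Phi}\in\mathbb R^{M_R\times M_T}$ have i.i.d. $\mathcal N(0,\sigma^2)$ entries, and let $\mathbf\Sigma\in\mathbb R^{M_R\times M_T}$ have $[\mathbf\Sigma]_{1,1}=\sqrt{M_TM_R}$ and all other entries zero. Write $\mathbf S=-j\mathbf\Sigma+\tilde{\mathbf\Phi}=[\mathbf s_1\ \cdots\ \mathbf s_{M_R}]^T$. Define $\mathbf s_1^\perp=\mathbf s_1$ and, for $i=2,\dots,M_R$, $\mathbf A_i=\mathbf I_{M_T}-\sum_{n=1}^{i-1}\frac{\mathbf s_n^\perp\mathbf s_n^{\perp H}}{\|\mathbf s_n^\perp\|^2}$ and $\mathbf s_i^\perp=\mathbf A_i\mathbf s_i$ (Gram–Schmidt). Then, with probability 1, for each $i=2,\dots,M_R$ the real symmetric matrix $\mathrm{Re}(\mathbf A_i)$ has eigenvalues $$\{\underbrace{1,\dots,1}_{M_T-i},\ \underbrace{0,\dots,0}_{i-2},\ \eta^{(i)},\ 1-\eta^{(i)}\}$$ for some $\eta^{(i)}=\eta^{(i)}(\mathbf s_1^\perp,\dots,\mathbf s_{i-1}^\perp)\in[0,1]$.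
   Context: $\mathbf s_i^T$ denotes the $i$th row of $\mathbf S$; $\mathrm{Re}$ is the entrywise real part. *)

theory Defs
  imports "HOL-Probability.Probability" "Jordan_Normal_Form.Char_Poly"
begin

definition cvnorm2 :: "complex vec \<Rightarrow> real" where
  "cvnorm2 v = (\<Sum>k<dim_vec v. (cmod (v $ k))\<^sup>2)"

definition outer_H :: "complex vec \<Rightarrow> complex mat" where
  "outer_H v = mat (dim_vec v) (dim_vec v) (\<lambda>(r, c). v $ r * cnj (v $ c))"

definition gs_proj :: "nat \<Rightarrow> complex vec list \<Rightarrow> complex mat" where
  "gs_proj n vs = 1\<^sub>m n - foldr (\<lambda>v B. (complex_of_real (1 / cvnorm2 v)) \<cdot>\<^sub>m outer_H v + B) vs (0\<^sub>m n n)"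

text \<open>gs_perps S k = [s_1^perp, ..., s_k^perp] (Gram-Schmidt on the rows of S, rows 0-indexed).\<close>
fun gs_perps :: "complex mat \<Rightarrow> nat \<Rightarrow> complex vec list" where
  "gs_perps S 0 = []"
| "gs_perps S (Suc k) = gs_perps S k @ [gs_proj (dim_col S) (gs_perps S k) *\<^sub>v row S k]"

text \<open>Paper's A_i (1-based i): projector built from s_1^perp, ..., s_(i-1)^perp.\<close>
definition gs_A :: "complex mat \<Rightarrow> nat \<Rightarrow> complex mat" where
  "gs_A S i = gs_proj (dim_col S) (gs_perps S (i - 1))"

definition Re_mat :: "complex mat \<Rightarrow> real mat" where
  "Re_mat A = map_mat Re A"

definition S_mat :: "nat \<Rightarrow> nat \<Rightarrow> (nat \<times> nat \<Rightarrow> real) \<Rightarrow> complex mat" where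
  "S_mat MR MT Phi = mat MR MT (\<lambda>(r, c).
     (if r = 0 \<and> c = 0 then - \<i> * complex_of_real (sqrt (real MT * real MR)) else 0)
     + complex_of_real (Phi (r, c)))"

definition has_eigenvalues :: "real mat \<Rightarrow> real multiset \<Rightarrow> bool" where
  "has_eigenvalues A E \<longleftrightarrow> char_poly A = prod_mset (image_mset (\<lambda>x. [:- x, 1:]) E)"

end

theory Submission
  imports Defs "Jordan_Normal_Form.Schur_Decomposition"
begin

(* Index the rows of S = -j Sigma + Phi from 0, so s_0 = -j gamma e_0 + phi_0 and s_j = phi_j for
   j > 0, where gamma = sqrt (MT * MR) and phi_j is the j-th row of Phi.  For k = i - 1 the matrix
   A = gs_A S i is I minus the orthogonal projector onto the span of the Gram-Schmidt vectors
   g_0, ..., g_(k-1), hence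
     (a) every column of I - A lies in the span of s_0, ..., s_(k-1),
     (b) A s_j = 0 for j < k, and
     (c) Re (x^H A x) >= 0 for every x.
   Taking real parts of (a) and (b), M = Re A satisfies M Q = Q T, where Q has the columns
   e_0, phi_0, ..., phi_(k-1), e_(k+1), ..., e_(MT-1) and T is block triangular with a 2x2 block of
   trace 1, a zero block of size k - 1 and an identity block of size MT - k - 1.  If Q is
   invertible, M is similar to T; the 2x2 block has real eigenvalues eta and 1 - eta, and (c)
   forces eta into [0,1].  Finally det Q is the k x k minor of Phi on rows 0..k-1 and columns 1..k;
   if the (k-1)-minor is nonzero, the k-minor vanishes only when one entry of Phi equals a
   measurable function of the others (Laplace expansion), a null event for atomless coordinates. *)


section \<open>Inner products and orthogonal residuals\<close>

lemma sum_eq_single: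
  assumes "a \<in> S" "finite S" "\<And>j. j \<in> S \<Longrightarrow> j \<noteq> a \<Longrightarrow> g j = 0"
  shows "sum g S = g a"
proof -
  have "sum g S = g a + sum g (S - {a})" by (rule sum.remove) (use assms in auto)
  also have "sum g (S - {a}) = 0" by (rule sum.neutral) (use assms in auto)
  finally show ?thesis by simp
qed

lemma sum_delta_right:
  "c < (n::nat) \<Longrightarrow> (\<Sum>d<n. f d * (if d = c then 1 else 0)) = (f c :: 'a :: comm_ring_1)"
  by (subst sum_eq_single[of c]) auto

text \<open>Vectors are functions \<open>nat \<Rightarrow> complex\<close> of which only the first \<open>n\<close> coordinates matter.\<close>

definition cinner :: "nat \<Rightarrow> (nat \<Rightarrow> complex) \<Rightarrow> (nat \<Rightarrow> complex) \<Rightarrow> complex" where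
  "cinner n x y = (\<Sum>r<n. cnj (x r) * y r)"

lemma cinner_cong:
  "(\<And>r. r < n \<Longrightarrow> x r = x' r) \<Longrightarrow> (\<And>r. r < n \<Longrightarrow> y r = y' r) \<Longrightarrow> cinner n x y = cinner n x' y'"
  unfolding cinner_def by (rule sum.cong) auto

lemma cinner_self: "cinner n v v = complex_of_real (\<Sum>r<n. (cmod (v r))\<^sup>2)"
  unfolding cinner_def of_real_sum
  by (rule sum.cong, simp, subst complex_norm_square, simp add: mult.commute)

lemma cinner_self_eq_0:
  assumes "cinner n v v = 0" "r < n"
  shows "v r = 0"
proof -
  have "(\<Sum>r<n. (cmod (v r))\<^sup>2) = 0"
    using assms(1) cinner_self[of n v] by (metis of_real_eq_0_iff)
  then have "\<forall>r\<in>{..<n}. (cmod (v r))\<^sup>2 = 0" by (subst (asm) sum_nonneg_eq_0_iff) auto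
  then show ?thesis using assms(2) by simp
qed

lemma cinner_commute: "cinner n u v = cnj (cinner n v u)"
  unfolding cinner_def by (simp add: mult.commute)

lemma cinner_diff_right: "cinner n u (\<lambda>r. x r - y r) = cinner n u x - cinner n u y"
  unfolding cinner_def by (simp add: sum_subtractf right_diff_distrib)

lemma cinner_sum_right: "cinner n u (\<lambda>r. \<Sum>j<k. g j r * a j) = (\<Sum>j<k. cinner n u (g j) * a j)"
  unfolding cinner_def
  by (simp add: sum_distrib_left sum_distrib_right mult.assoc sum.swap[of _ "{..<n}"])

lemma cinner_sum_left: "cinner n (\<lambda>r. \<Sum>j<k. a j * g j r) v = (\<Sum>j<k. cnj (a j) * cinner n (g j) v)"
  unfolding cinner_def
  by (simp add: sum_distrib_left sum_distrib_right mult.assoc mult.left_commute sum.swap[of _ "{..<n}"])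

definition in_span :: "nat \<Rightarrow> (nat \<Rightarrow> nat \<Rightarrow> complex) \<Rightarrow> nat \<Rightarrow> (nat \<Rightarrow> complex) \<Rightarrow> bool" where
  "in_span n g k f \<longleftrightarrow> (\<exists>a. \<forall>r<n. f r = (\<Sum>l<k. a l * g l r))"

lemma in_span_cong: "in_span n g k f \<Longrightarrow> (\<And>r. r < n \<Longrightarrow> f r = f' r) \<Longrightarrow> in_span n g k f'"
  unfolding in_span_def by auto

lemma in_span_diff: "in_span n g k f \<Longrightarrow> in_span n g k f' \<Longrightarrow> in_span n g k (\<lambda>r. f r - f' r)"
  unfolding in_span_def
proof (elim exE)
  fix a a' assume "\<forall>r<n. f r = (\<Sum>l<k. a l * g l r)" "\<forall>r<n. f' r = (\<Sum>l<k. a' l * g l r)"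
  then show "\<exists>b. \<forall>r<n. f r - f' r = (\<Sum>l<k. b l * g l r)"
    by (intro exI[of _ "\<lambda>l. a l - a' l"]) (simp add: sum_subtractf left_diff_distrib)
qed

lemma in_span_add: "in_span n g k f \<Longrightarrow> in_span n g k f' \<Longrightarrow> in_span n g k (\<lambda>r. f r + f' r)"
  unfolding in_span_def
proof (elim exE)
  fix a a' assume "\<forall>r<n. f r = (\<Sum>l<k. a l * g l r)" "\<forall>r<n. f' r = (\<Sum>l<k. a' l * g l r)"
  then show "\<exists>b. \<forall>r<n. f r + f' r = (\<Sum>l<k. b l * g l r)"
    by (intro exI[of _ "\<lambda>l. a l + a' l"]) (simp add: sum.distrib distrib_right)
qed

lemma in_span_mono:
  assumes "in_span n g k f" "k \<le> k'"
  shows "in_span n g k' f"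
proof -
  obtain a where a: "\<forall>r<n. f r = (\<Sum>l<k. a l * g l r)" using assms(1) unfolding in_span_def by blast
  define a' where "a' l = (if l < k then a l else 0)" for l
  have "f r = (\<Sum>l<k'. a' l * g l r)" if r: "r < n" for r
  proof -
    have "(\<Sum>l<k'. a' l * g l r) = (\<Sum>l<k. a' l * g l r)"
      by (rule sum.mono_neutral_right) (use assms(2) in \<open>auto simp: a'_def\<close>)
    also have "\<dots> = (\<Sum>l<k. a l * g l r)" by (rule sum.cong) (auto simp: a'_def)
    finally show ?thesis using a r by simp
  qed
  then show ?thesis unfolding in_span_def by (intro exI[of _ a']) blast
qed

lemma in_span_member:
  assumes "j < k"
  shows "in_span n g k (g j)"
proof -
  have "g j r = (\<Sum>l<k. (if l = j then 1 else 0) * g l r)" for r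
  proof -
    have "(\<Sum>l<k. (if l = j then 1 else 0) * g l r) = (\<Sum>l<k. if l = j then g l r else 0)"
      by (rule sum.cong) auto
    then show ?thesis using assms by simp
  qed
  then show ?thesis unfolding in_span_def by (intro exI[of _ "\<lambda>l. if l = j then 1 else 0"]) fast
qed

lemma in_span_lincomb:
  assumes "\<And>l. l < k \<Longrightarrow> in_span n g m (f l)"
  shows "in_span n g m (\<lambda>r. \<Sum>l<k. f l r * a l)"
proof -
  have "\<forall>l\<in>{..<k}. \<exists>b. \<forall>r<n. f l r = (\<Sum>l'<m. b l' * g l' r)"
    using assms unfolding in_span_def by blast
  from bchoice[OF this] obtain B where B: "\<forall>l\<in>{..<k}. \<forall>r<n. f l r = (\<Sum>l'<m. B l l' * g l' r)"
    by blast
  have "(\<Sum>l<k. f l r * a l) = (\<Sum>l'<m. (\<Sum>l<k. a l * B l l') * g l' r)" if r: "r < n" for r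
  proof -
    have "(\<Sum>l<k. f l r * a l) = (\<Sum>l<k. (\<Sum>l'<m. B l l' * g l' r) * a l)"
      using B r by (intro sum.cong) auto
    also have "\<dots> = (\<Sum>l'<m. (\<Sum>l<k. a l * B l l') * g l' r)"
      unfolding sum_distrib_right by (subst sum.swap) (simp add: mult_ac)
    finally show ?thesis .
  qed
  then show ?thesis unfolding in_span_def by (intro exI[of _ "\<lambda>l'. \<Sum>l<k. a l * B l l'"]) blast
qed

lemma in_span_orth_zero:
  assumes "in_span n g k f" "\<And>l. l < k \<Longrightarrow> cinner n (g l) f = 0" "r < n"
  shows "f r = 0"
proof -
  obtain a where a: "\<forall>r<n. f r = (\<Sum>l<k. a l * g l r)" using assms(1) unfolding in_span_def by blast
  have "cinner n f f = cinner n (\<lambda>r. \<Sum>l<k. a l * g l r) f" by (rule cinner_cong) (use a in auto)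
  also have "\<dots> = 0" unfolding cinner_sum_left using assms(2) by simp
  finally show ?thesis using cinner_self_eq_0 assms(3) by blast
qed

text \<open>The residual of \<open>x\<close> after subtracting its components along \<open>g 0, \<dots>, g (k - 1)\<close>; for an
  orthogonal family this is the orthogonal projection onto the complement of their span.\<close>

definition perp_part :: "nat \<Rightarrow> (nat \<Rightarrow> nat \<Rightarrow> complex) \<Rightarrow> nat \<Rightarrow> (nat \<Rightarrow> complex) \<Rightarrow> nat \<Rightarrow> complex" where
  "perp_part n g k x r = x r - (\<Sum>j<k. g j r * (cinner n (g j) x / cinner n (g j) (g j)))"

lemma perp_part_orth:
  assumes orth: "\<And>j l. j < k \<Longrightarrow> l < k \<Longrightarrow> j \<noteq> l \<Longrightarrow> cinner n (g j) (g l) = 0"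
    and l: "l < k"
  shows "cinner n (g l) (perp_part n g k x) = 0"
proof -
  have "cinner n (g l) (perp_part n g k x)
      = cinner n (g l) x - (\<Sum>j<k. cinner n (g l) (g j) * (cinner n (g j) x / cinner n (g j) (g j)))"
    unfolding perp_part_def cinner_diff_right cinner_sum_right ..
  also have "(\<Sum>j<k. cinner n (g l) (g j) * (cinner n (g j) x / cinner n (g j) (g j)))
      = cinner n (g l) (g l) * (cinner n (g l) x / cinner n (g l) (g l))"
    by (rule sum_eq_single) (use l orth in auto)
  also have "cinner n (g l) x - \<dots> = 0"
  proof (cases "cinner n (g l) (g l) = 0")
    case True
    then have "cinner n (g l) x = 0"
      unfolding cinner_def using cinner_self_eq_0[OF True] by (intro sum.neutral) auto
    then show ?thesis by simp
  qed simp
  finally show ?thesis .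
qed

lemma in_span_sub_perp_part: "in_span n g k (\<lambda>r. x r - perp_part n g k x r)"
  unfolding in_span_def perp_part_def
  by (intro exI[of _ "\<lambda>j. cinner n (g j) x / cinner n (g j) (g j)"]) (simp add: mult.commute)

lemma perp_part_in_span:
  assumes orth: "\<And>j l. j < k \<Longrightarrow> l < k \<Longrightarrow> j \<noteq> l \<Longrightarrow> cinner n (g j) (g l) = 0"
    and x: "in_span n g k x" and r: "r < n"
  shows "perp_part n g k x r = 0"
proof -
  have "in_span n g k (\<lambda>r. x r - (x r - perp_part n g k x r))"
    by (rule in_span_diff[OF x in_span_sub_perp_part])
  then have "in_span n g k (perp_part n g k x)" by simp
  then show ?thesis using perp_part_orth[OF orth] r by (rule in_span_orth_zero)
qed

text \<open>Taking the residual is a positive semidefinite operation: \<open>x\<^sup>H (I - P) x = \<parallel>(I - P) x\<parallel>\<^sup>2\<close>.\<close>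

lemma perp_part_nonneg:
  assumes orth: "\<And>j l. j < k \<Longrightarrow> l < k \<Longrightarrow> j \<noteq> l \<Longrightarrow> cinner n (g j) (g l) = 0"
  shows "0 \<le> Re (cinner n x (perp_part n g k x))"
proof -
  let ?p = "perp_part n g k x"
  obtain a where a: "\<forall>r<n. x r - ?p r = (\<Sum>l<k. a l * g l r)"
    using in_span_sub_perp_part[of n g k x] unfolding in_span_def by blast
  have "cinner n x ?p = cinner n (\<lambda>r. ?p r + (\<Sum>l<k. a l * g l r)) ?p"
    by (rule cinner_cong) (use a in \<open>auto simp: algebra_simps\<close>)
  also have "\<dots> = cinner n ?p ?p + cinner n (\<lambda>r. \<Sum>l<k. a l * g l r) ?p"
    unfolding cinner_def by (simp add: sum.distrib distrib_right)
  also have "cinner n (\<lambda>r. \<Sum>l<k. a l * g l r) ?p = 0"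
    unfolding cinner_sum_left using perp_part_orth[of k n g, OF orth] by simp
  finally show ?thesis using cinner_self[of n ?p] by (simp add: sum_nonneg)
qed


section \<open>The Gram-Schmidt projectors\<close>

lemma gs_perps_length [simp]: "length (gs_perps S k) = k"
  by (induction k) auto

lemma gs_perps_nth: "j < k \<Longrightarrow> gs_perps S k ! j = gs_perps S (Suc j) ! j"
proof (induction k)
  case (Suc k)
  show ?case
  proof (cases "j < k")
    case True
    then show ?thesis using Suc by (simp add: nth_append)
  next
    case False
    then have "j = k" using Suc by simp
    then show ?thesis by simp
  qed
qed simp

text \<open>The Gram-Schmidt vector \<open>g j\<close> (the paper's \<open>s\<^sub>j\<^sub>+\<^sub>1\<^sup>\<bottom>\<close>) as a function of the coordinate.\<close>

definition gs_vec :: "complex mat \<Rightarrow> nat \<Rightarrow> nat \<Rightarrow> complex" where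
  "gs_vec S j r = (gs_perps S (Suc j) ! j) $ r"

definition proj_sum :: "nat \<Rightarrow> complex vec list \<Rightarrow> complex mat" where
  "proj_sum n vs = foldr (\<lambda>v B. complex_of_real (1 / cvnorm2 v) \<cdot>\<^sub>m outer_H v + B) vs (0\<^sub>m n n)"

lemma gs_proj_eq: "gs_proj n vs = 1\<^sub>m n - proj_sum n vs"
  unfolding gs_proj_def proj_sum_def ..

lemma proj_sum_Cons: "proj_sum n (v # vs) = complex_of_real (1 / cvnorm2 v) \<cdot>\<^sub>m outer_H v + proj_sum n vs"
  unfolding proj_sum_def by simp

lemma proj_sum_carrier: "proj_sum n vs \<in> carrier_mat n n"
  by (induction vs) (auto simp: proj_sum_def)

lemma gs_proj_dims [simp]: "dim_row (gs_proj n vs) = n" "dim_col (gs_proj n vs) = n"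
  using proj_sum_carrier[of n vs] by (auto simp: gs_proj_eq)

lemma gs_perps_dim: "j < k \<Longrightarrow> dim_vec (gs_perps S k ! j) = dim_col S"
  by (subst gs_perps_nth) (simp_all add: nth_append)

lemma cvnorm2_cinner: "complex_of_real (cvnorm2 v) = cinner (dim_vec v) (\<lambda>t. v $ t) (\<lambda>t. v $ t)"
  by (simp add: cvnorm2_def cinner_self)

lemma proj_sum_entry:
  assumes "\<forall>v\<in>set vs. dim_vec v = n" "r < n" "c < n"
  shows "proj_sum n vs $$ (r,c)
     = (\<Sum>j<length vs. (vs!j) $ r * cnj ((vs!j) $ c) / cinner n (\<lambda>t. (vs!j) $ t) (\<lambda>t. (vs!j) $ t))"
  using assms
proof (induction vs)
  case (Cons v vs)
  have dv: "dim_vec v = n" using Cons by simp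
  have head: "complex_of_real (1 / cvnorm2 v) * (v $ r * cnj (v $ c))
      = v $ r * cnj (v $ c) / cinner n (\<lambda>t. v $ t) (\<lambda>t. v $ t)"
    using cvnorm2_cinner[of v] dv by (simp add: divide_inverse of_real_inverse mult.commute)
  have "proj_sum n (v # vs) $$ (r,c)
      = complex_of_real (1 / cvnorm2 v) * (v $ r * cnj (v $ c)) + proj_sum n vs $$ (r,c)"
    using proj_sum_carrier[of n vs] Cons.prems dv by (simp add: proj_sum_Cons outer_H_def)
  have IH: "proj_sum n vs $$ (r,c)
      = (\<Sum>j<length vs. (vs!j) $ r * cnj ((vs!j) $ c) / cinner n (\<lambda>t. (vs!j) $ t) (\<lambda>t. (vs!j) $ t))"
    using Cons by auto
  have "proj_sum n (v # vs) $$ (r,c)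
      = complex_of_real (1 / cvnorm2 v) * (v $ r * cnj (v $ c)) + proj_sum n vs $$ (r,c)"
    using proj_sum_carrier[of n vs] Cons.prems dv by (simp add: proj_sum_Cons outer_H_def)
  then show ?case
    unfolding head IH length_Cons sum.lessThan_Suc_shift by simp
qed (simp add: proj_sum_def)

lemma gs_perps_nth_vec: "j < k \<Longrightarrow> ($) (gs_perps S k ! j) = gs_vec S j"
  using gs_perps_nth[of j k S] by (simp add: gs_vec_def[abs_def])

lemma gs_proj_perps_entry:
  assumes "r < dim_col S" "c < dim_col S"
  shows "gs_proj (dim_col S) (gs_perps S k) $$ (r,c) = (if r = c then 1 else 0)
     - (\<Sum>j<k. gs_vec S j r * cnj (gs_vec S j c) / cinner (dim_col S) (gs_vec S j) (gs_vec S j))"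
proof -
  let ?n = "dim_col S"
  have dims: "\<forall>v\<in>set (gs_perps S k). dim_vec v = ?n"
    by (auto simp: in_set_conv_nth gs_perps_dim)
  have "gs_proj ?n (gs_perps S k) $$ (r,c) = (if r = c then 1 else 0) - proj_sum ?n (gs_perps S k) $$ (r,c)"
    using assms proj_sum_carrier[of ?n "gs_perps S k"] by (simp add: gs_proj_eq)
  also have "proj_sum ?n (gs_perps S k) $$ (r,c)
      = (\<Sum>j<k. gs_vec S j r * cnj (gs_vec S j c) / cinner ?n (gs_vec S j) (gs_vec S j))"
    unfolding proj_sum_entry[OF dims assms] gs_perps_length
    by (intro sum.cong refl) (simp add: gs_perps_nth_vec)
  finally show ?thesis .
qed

lemma gs_proj_apply:
  assumes r: "r < dim_col S"
  shows "(\<Sum>c<dim_col S. gs_proj (dim_col S) (gs_perps S k) $$ (r,c) * x c)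
       = perp_part (dim_col S) (gs_vec S) k x r"
proof -
  let ?n = "dim_col S"
  let ?P = "\<lambda>c. (\<Sum>j<k. gs_vec S j r * cnj (gs_vec S j c) / cinner ?n (gs_vec S j) (gs_vec S j))"
  have "(\<Sum>c<?n. gs_proj ?n (gs_perps S k) $$ (r,c) * x c)
      = (\<Sum>c<?n. (if r = c then 1 else 0) * x c) - (\<Sum>c<?n. ?P c * x c)"
    using r by (simp add: gs_proj_perps_entry left_diff_distrib sum_subtractf)
  also have "(\<Sum>c<?n. (if r = c then 1 else 0) * x c) = x r"
    using r by (subst sum_eq_single[of r]) auto
  also have "(\<Sum>c<?n. ?P c * x c)
      = (\<Sum>j<k. gs_vec S j r * (cinner ?n (gs_vec S j) x / cinner ?n (gs_vec S j) (gs_vec S j)))"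
    unfolding cinner_def sum_distrib_right sum_distrib_left sum_divide_distrib
    by (subst sum.swap) (simp add: mult_ac cinner_def)
  finally show ?thesis unfolding perp_part_def .
qed

lemma gs_vec_perp_part:
  assumes "r < dim_col S"
  shows "gs_vec S j r = perp_part (dim_col S) (gs_vec S) j (\<lambda>c. S $$ (j, c)) r"
proof -
  have "gs_vec S j r = (gs_proj (dim_col S) (gs_perps S j) *\<^sub>v row S j) $ r"
    unfolding gs_vec_def by (simp add: nth_append)
  also have "\<dots> = (\<Sum>c<dim_col S. gs_proj (dim_col S) (gs_perps S j) $$ (r,c) * S $$ (j, c))"
    using assms by (simp add: scalar_prod_def row_def atLeast0LessThan)
  finally show ?thesis using gs_proj_apply[OF assms] by simp
qed

lemma gs_vec_orth: "j < k \<Longrightarrow> l < k \<Longrightarrow> j \<noteq> l \<Longrightarrow> cinner (dim_col S) (gs_vec S j) (gs_vec S l) = 0"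
proof (induction k arbitrary: j l)
  case (Suc k)
  have new: "cinner (dim_col S) (gs_vec S l') (gs_vec S k) = 0" if "l' < k" for l'
  proof -
    have "cinner (dim_col S) (gs_vec S l') (gs_vec S k)
        = cinner (dim_col S) (gs_vec S l') (perp_part (dim_col S) (gs_vec S) k (\<lambda>c. S $$ (k, c)))"
      by (rule cinner_cong) (auto simp: gs_vec_perp_part)
    also have "\<dots> = 0" by (rule perp_part_orth) (use Suc.IH that in auto)
    finally show ?thesis .
  qed
  consider "j < k" "l < k" | "j = k" "l < k" | "l = k" "j < k" using Suc.prems by linarith
  then show ?case
  proof cases
    case 2
    then show ?thesis using new[of l] cinner_commute[of "dim_col S" "gs_vec S k" "gs_vec S l"] by simp
  qed (use Suc new in auto)
qed simp

lemma gs_vec_in_row_span: "in_span (dim_col S) (\<lambda>l c. S $$ (l, c)) (Suc j) (gs_vec S j)"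
proof (induction j rule: less_induct)
  case (less j)
  let ?rows = "\<lambda>l c. S $$ (l, c)"
  have "in_span (dim_col S) ?rows (Suc j) (\<lambda>r. \<Sum>l<j. gs_vec S l r
          * (cinner (dim_col S) (gs_vec S l) (?rows j) / cinner (dim_col S) (gs_vec S l) (gs_vec S l)))"
    by (rule in_span_lincomb, rule in_span_mono, rule less) auto
  with in_span_member[OF lessI, of "dim_col S" ?rows]
  have "in_span (dim_col S) ?rows (Suc j) (\<lambda>r. S $$ (j, r) - (\<Sum>l<j. gs_vec S l r
          * (cinner (dim_col S) (gs_vec S l) (?rows j) / cinner (dim_col S) (gs_vec S l) (gs_vec S l))))"
    by (rule in_span_diff)
  then show ?case by (rule in_span_cong) (simp add: gs_vec_perp_part[where j = j] perp_part_def)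
qed

lemma row_in_gs_span:
  assumes "j < k"
  shows "in_span (dim_col S) (gs_vec S) k (\<lambda>c. S $$ (j, c))"
proof -
  let ?g = "perp_part (dim_col S) (gs_vec S) j (\<lambda>c. S $$ (j, c))"
  have "in_span (dim_col S) (gs_vec S) (Suc j) (\<lambda>r. S $$ (j, r) - ?g r)"
    by (rule in_span_mono[OF in_span_sub_perp_part]) simp
  moreover have "in_span (dim_col S) (gs_vec S) (Suc j) (gs_vec S j)"
    by (rule in_span_member) simp
  ultimately have "in_span (dim_col S) (gs_vec S) (Suc j) (\<lambda>r. (S $$ (j, r) - ?g r) + gs_vec S j r)"
    by (rule in_span_add)
  then have "in_span (dim_col S) (gs_vec S) (Suc j) (\<lambda>c. S $$ (j, c))"
    by (rule in_span_cong) (simp add: gs_vec_perp_part)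
  then show ?thesis by (rule in_span_mono) (use assms in simp)
qed

lemma gs_residual_in_row_span:
  "in_span (dim_col S) (\<lambda>l c. S $$ (l, c)) k (\<lambda>r. x r - perp_part (dim_col S) (gs_vec S) k x r)"
proof -
  have "in_span (dim_col S) (\<lambda>l c. S $$ (l, c)) k (\<lambda>r. \<Sum>l<k. gs_vec S l r
          * (cinner (dim_col S) (gs_vec S l) x / cinner (dim_col S) (gs_vec S l) (gs_vec S l)))"
    by (rule in_span_lincomb, rule in_span_mono, rule gs_vec_in_row_span) auto
  then show ?thesis by (rule in_span_cong) (simp add: perp_part_def)
qed

lemma gs_residual_of_row:
  assumes "j < k" "r < dim_col S"
  shows "perp_part (dim_col S) (gs_vec S) k (\<lambda>c. S $$ (j, c)) r = 0"
  by (rule perp_part_in_span[OF gs_vec_orth row_in_gs_span assms(2)]) (use assms(1) in auto)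

lemma gs_residual_nonneg: "0 \<le> Re (cinner (dim_col S) x (perp_part (dim_col S) (gs_vec S) k x))"
  by (rule perp_part_nonneg) (rule gs_vec_orth)


section \<open>Characteristic polynomials\<close>

lemma char_poly_2x2:
  assumes C: "(C :: real mat) \<in> carrier_mat 2 2"
  shows "char_poly C = [:C $$ (0,0) * C $$ (1,1) - C $$ (0,1) * C $$ (1,0), - (C $$ (0,0) + C $$ (1,1)), 1:]"
proof -
  let ?P = "char_poly_matrix C"
  have P: "?P \<in> carrier_mat 2 2" using C by simp
  have e: "?P $$ (i,j) = (if i = j then [:0,1:] else 0) + [:- C $$ (i,j):]" if "i < 2" "j < 2" for i j
    using C that unfolding char_poly_matrix_def by auto
  have "char_poly C = (\<Sum>i<2. ?P $$ (i,0) * cofactor ?P i 0)"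
    unfolding char_poly_def by (rule laplace_expansion_column[OF P]) simp
  also have "\<dots> = ?P $$ (0,0) * cofactor ?P 0 0 + ?P $$ (1,0) * cofactor ?P 1 0"
    by (simp add: numeral_2_eq_2)
  also have "cofactor ?P 0 0 = ?P $$ (1,1)"
    unfolding cofactor_def using P by (subst det_single) (auto simp: mat_delete_def)
  also have "cofactor ?P 1 0 = - ?P $$ (0,1)"
    unfolding cofactor_def using P by (subst det_single) (auto simp: mat_delete_def)
  finally show ?thesis using e by (simp add: algebra_simps)
qed

text \<open>A real 2x2 matrix of trace 1 whose off-diagonal entries have nonnegative product has a
  nonnegative discriminant, hence real eigenvalues \<open>\<eta>\<close> and \<open>1 - \<eta>\<close>.\<close>

lemma char_poly_2x2_trace_one:
  assumes C: "(C :: real mat) \<in> carrier_mat 2 2"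
    and tr: "C $$ (0,0) + C $$ (1,1) = 1" and off: "0 \<le> C $$ (0,1) * C $$ (1,0)"
  shows "\<exists>\<eta>. char_poly C = [:-\<eta>, 1:] * [:-(1-\<eta>), 1:]"
proof -
  define d where "d = C $$ (0,0) * C $$ (1,1) - C $$ (0,1) * C $$ (1,0)"
  have c11: "C $$ (1,1) = 1 - C $$ (0,0)" using tr by simp
  have "1 - 4 * d = (C $$ (0,0) - C $$ (1,1))\<^sup>2 + 4 * (C $$ (0,1) * C $$ (1,0))"
    unfolding d_def c11 by (simp add: power2_eq_square algebra_simps)
  then have disc: "0 \<le> 1 - 4 * d" using off by (smt (verit) zero_le_power2)
  define \<eta> where "\<eta> = (1 + sqrt (1 - 4 * d)) / 2"
  have "sqrt (1 - 4 * d) ^ 2 = 1 - 4 * d" using disc by simp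
  then have prod: "\<eta> * (1 - \<eta>) = d" unfolding \<eta>_def by (simp add: field_simps power2_eq_square)
  have "char_poly C = [:d, - (C $$ (0,0) + C $$ (1,1)), 1:]"
    unfolding d_def by (rule char_poly_2x2[OF C])
  also have "\<dots> = [:d, -1, 1:]" by (simp only: tr)
  also have "\<dots> = [:-\<eta>, 1:] * [:-(1-\<eta>), 1:]" using prod by (simp add: algebra_simps)
  finally show ?thesis by blast
qed

lemma char_poly_one_mat: "char_poly (1\<^sub>m p :: real mat) = [:-1,1:] ^ p"
proof -
  have "char_poly (1\<^sub>m p :: real mat) = (\<Prod>a\<leftarrow>diag_mat (1\<^sub>m p :: real mat). [:- a, 1:])"
    by (rule char_poly_upper_triangular[of _ p]) (auto simp: upper_triangular_def)
  also have "diag_mat (1\<^sub>m p :: real mat) = replicate p 1"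
    by (rule nth_equalityI) (auto simp: diag_mat_def)
  finally show ?thesis by (simp add: prod_list_replicate)
qed

lemma char_poly_zero_mat: "char_poly (0\<^sub>m p p :: real mat) = [:0,1:] ^ p"
proof -
  have "char_poly (0\<^sub>m p p :: real mat) = (\<Prod>a\<leftarrow>diag_mat (0\<^sub>m p p :: real mat). [:- a, 1:])"
    by (rule char_poly_upper_triangular[of _ p]) (auto simp: upper_triangular_def)
  also have "diag_mat (0\<^sub>m p p :: real mat) = replicate p 0"
    by (rule nth_equalityI) (auto simp: diag_mat_def)
  finally show ?thesis by (simp add: prod_list_replicate)
qed

text \<open>Characteristic polynomial of a matrix with the block structure
  \<open>[[C, 0, *], [X, 0, *], [0, 0, I]]\<close>, where \<open>C\<close> is the leading 2x2 block, the zero columns are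
  \<open>2, \<dots>, m - 1\<close> and the identity block has size \<open>n - m\<close>.\<close>

lemma char_poly_block_trace_one:
  fixes T :: "real mat"
  assumes T: "T \<in> carrier_mat n n" and m: "2 \<le> m" "m \<le> n"
    and lower: "\<And>d c. d < n \<Longrightarrow> m \<le> d \<Longrightarrow> c < m \<Longrightarrow> T $$ (d,c) = 0"
    and ident: "\<And>d c. m \<le> d \<Longrightarrow> d < n \<Longrightarrow> m \<le> c \<Longrightarrow> c < n \<Longrightarrow> T $$ (d,c) = (if d = c then 1 else 0)"
    and zero_cols: "\<And>d c. d < n \<Longrightarrow> 2 \<le> c \<Longrightarrow> c < m \<Longrightarrow> T $$ (d,c) = 0"
    and tr: "T $$ (0,0) + T $$ (1,1) = 1" and off: "0 \<le> T $$ (0,1) * T $$ (1,0)"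
  shows "\<exists>\<eta>. char_poly T = [:-1,1:] ^ (n-m) * [:0,1:] ^ (m-2) * ([:-\<eta>, 1:] * [:-(1-\<eta>), 1:])"
proof -
  define T1 where "T1 = mat m m (\<lambda>(d,c). T $$ (d,c))"
  define T2 where "T2 = mat m (n-m) (\<lambda>(d,c). T $$ (d, c + m))"
  define C where "C = mat 2 2 (\<lambda>(d,c). T $$ (d,c))"
  define X where "X = mat (m-2) 2 (\<lambda>(d,c). T $$ (d + 2, c))"
  have TT: "T = four_block_mat T1 T2 (0\<^sub>m (n-m) m) (1\<^sub>m (n-m))"
    by (rule eq_matI) (use T m in \<open>auto simp: T1_def T2_def lower ident\<close>)
  have shift: "\<And>i. \<not> i < 2 \<Longrightarrow> Suc (Suc (i - 2)) = i" by arith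
  have T11: "T1 = four_block_mat C (0\<^sub>m 2 (m-2)) X (0\<^sub>m (m-2) (m-2))"
    by (rule eq_matI) (use T m in \<open>auto simp: T1_def C_def X_def zero_cols shift\<close>)
  obtain \<eta> where cC: "char_poly C = [:-\<eta>, 1:] * [:-(1-\<eta>), 1:]"
    using char_poly_2x2_trace_one[of C] tr off by (auto simp: C_def numeral_2_eq_2)
  have "char_poly T1 = char_poly C * char_poly (0\<^sub>m (m-2) (m-2) :: real mat)"
  proof (rule char_poly_0_block'[OF T11])
    show "\<exists>es. char_poly C = (\<Prod>a\<leftarrow>es. [:- a, 1:])"
      by (rule exI[of _ "[\<eta>, 1-\<eta>]"]) (simp add: cC)
    show "\<exists>es. char_poly (0\<^sub>m (m-2) (m-2) :: real mat) = (\<Prod>a\<leftarrow>es. [:- a, 1:])"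
      by (rule exI[of _ "replicate (m-2) 0"]) (simp add: char_poly_zero_mat prod_list_replicate)
  qed (auto simp: C_def X_def)
  then have cT1: "char_poly T1 = [:-\<eta>, 1:] * [:-(1-\<eta>), 1:] * [:0,1:] ^ (m-2)"
    by (simp add: cC char_poly_zero_mat)
  have "char_poly T = char_poly T1 * char_poly (1\<^sub>m (n-m) :: real mat)"
  proof (rule char_poly_0_block[OF TT])
    show "\<exists>es. char_poly T1 = (\<Prod>a\<leftarrow>es. [:- a, 1:])"
      by (rule exI[of _ "[\<eta>, 1-\<eta>] @ replicate (m-2) 0"])
        (simp add: cT1 prod_list_replicate mult.assoc del: mult_pCons_left mult_pCons_right)
    show "\<exists>es. char_poly (1\<^sub>m (n-m) :: real mat) = (\<Prod>a\<leftarrow>es. [:- a, 1:])"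
      by (rule exI[of _ "replicate (n-m) 1"]) (simp add: char_poly_one_mat prod_list_replicate)
  qed (auto simp: T1_def T2_def)
  then show ?thesis by (intro exI[of _ \<eta>]) (simp add: cT1 char_poly_one_mat mult_ac)
qed

lemma intertwined_char_poly:
  fixes M Q T :: "real mat"
  assumes M: "M \<in> carrier_mat n n" and Q: "Q \<in> carrier_mat n n" and T: "T \<in> carrier_mat n n"
    and dQ: "det Q \<noteq> 0" and MQ: "M * Q = Q * T"
  shows "char_poly M = char_poly T"
proof -
  have "Q \<in> Units (ring_mat TYPE(real) n ())" by (rule det_non_zero_imp_unit[OF Q dQ])
  then obtain Qi where Qi: "Qi \<in> carrier_mat n n" "Qi * Q = 1\<^sub>m n" "Q * Qi = 1\<^sub>m n"
    unfolding Units_def ring_mat_def by auto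
  have "M = M * (Q * Qi)" using M Qi by simp
  also have "\<dots> = (M * Q) * Qi" using M Q Qi by (simp add: assoc_mult_mat)
  also have "\<dots> = Q * T * Qi" unfolding MQ ..
  finally have "similar_mat_wit M T Q Qi" unfolding similar_mat_wit_def using M Q T Qi by auto
  then have "similar_mat M T" unfolding similar_mat_def by blast
  then show ?thesis by (rule char_poly_similar)
qed

lemma psd_root_nonneg:
  fixes M :: "real mat"
  assumes M: "M \<in> carrier_mat n n" and root: "poly (char_poly M) l = 0"
    and psd: "\<And>v. v \<in> carrier_vec n \<Longrightarrow> 0 \<le> v \<bullet> (M *\<^sub>v v)"
  shows "0 \<le> l"
proof (rule ccontr)
  assume "\<not> 0 \<le> l"
  then have l: "l < 0" by simp
  have "eigenvalue M l" using eigenvalue_root_char_poly[OF M] root by simp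
  then obtain v where v: "v \<in> carrier_vec n" "v \<noteq> 0\<^sub>v n" "M *\<^sub>v v = l \<cdot>\<^sub>v v"
    unfolding eigenvalue_def eigenvector_def using M by auto
  obtain i where i: "i < n" "v $ i \<noteq> 0"
    using v(1,2) by (metis carrier_vecD eq_vecI index_zero_vec)
  have pos: "0 < v \<bullet> v"
    unfolding scalar_prod_def
    by (rule sum_pos2[of _ i]) (use i v(1) in \<open>auto simp: zero_less_mult_iff linorder_neq_iff\<close>)
  have "v \<bullet> (M *\<^sub>v v) = l * (v \<bullet> v)" unfolding v(3) using v(1) by simp
  also have "\<dots> < 0" using pos l by (simp add: mult_neg_pos)
  finally show False using psd[OF v(1)] by simp
qed

lemma has_eigenvalues_root:
  assumes "has_eigenvalues A E" "x \<in># E"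
  shows "poly (char_poly A) x = 0"
  using assms unfolding has_eigenvalues_def by (auto simp: poly_prod_mset prod_mset_zero_iff)

lemma has_eigenvalues_pattern_iff:
  fixes \<eta> :: real
  shows "has_eigenvalues A (replicate_mset a 1 + replicate_mset b 0 + {#\<eta>, 1 - \<eta>#})
     \<longleftrightarrow> char_poly A = [:-1,1:] ^ a * [:0,1:] ^ b * ([:-\<eta>, 1:] * [:-(1-\<eta>), 1:])"
proof -
  let ?f = "\<lambda>x::real. [:- x, 1:]"
  have "prod_mset (image_mset ?f (replicate_mset a 1 + replicate_mset b 0 + {#\<eta>, 1 - \<eta>#}))
     = ?f 1 ^ a * ?f 0 ^ b * (?f \<eta> * ?f (1 - \<eta>))"
    by (simp del: mult_pCons_left mult_pCons_right)
  also have "?f 0 = [:0,1:]" by simp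
  finally show ?thesis unfolding has_eigenvalues_def by simp
qed


section \<open>The real part of a projector annihilating the rows of \<open>S\<close>\<close>

text \<open>Entries of the rows \<open>s\<^sub>j\<close> of \<open>S\<close>, with \<open>\<gamma>\<close> the nonzero entry of \<open>\<Sigma>\<close> and \<open>\<Phi> j r\<close> the real part.\<close>

definition s_entry :: "real \<Rightarrow> (nat \<Rightarrow> nat \<Rightarrow> real) \<Rightarrow> nat \<Rightarrow> nat \<Rightarrow> complex" where
  "s_entry \<gamma> \<Phi> j r = (if j = 0 \<and> r = 0 then - \<i> * complex_of_real \<gamma> else 0) + complex_of_real (\<Phi> j r)"

lemma S_mat_entry:
  "j < MR \<Longrightarrow> r < MT \<Longrightarrow> S_mat MR MT Phi $$ (j, r) = s_entry (sqrt (real MT * real MR)) (\<lambda>a b. Phi (a, b)) j r"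
  unfolding S_mat_def s_entry_def by simp

lemma S_mat_dims [simp]: "dim_col (S_mat MR MT Phi) = MT" "dim_row (S_mat MR MT Phi) = MR"
  unfolding S_mat_def by simp_all

lemma Re_mult_s_entry: "Re (z * s_entry \<gamma> \<Phi> j r) = Re z * \<Phi> j r + (if j = 0 \<and> r = 0 then \<gamma> * Im z else 0)"
  unfolding s_entry_def by (auto simp: algebra_simps)

lemma Im_mult_s_entry: "Im (z * s_entry \<gamma> \<Phi> j r) = Im z * \<Phi> j r - (if j = 0 \<and> r = 0 then \<gamma> * Re z else 0)"
  unfolding s_entry_def by (auto simp: algebra_simps)

lemma sum_if_first:
  assumes "0 < (k::nat)"
  shows "(\<Sum>j<k. if j = 0 \<and> r = 0 then f j else 0) = (if r = 0 then f 0 else (0::real))"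
  using assms by (cases "r = 0") (simp_all add: sum_eq_single[of 0])

lemma sum_split_three:
  assumes "1 \<le> m" "m \<le> n"
  shows "(\<Sum>d<n. f d) = f 0 + (\<Sum>j<m-1. f (Suc j)) + (\<Sum>d\<in>{m..<n}. f d)"
proof -
  have u: "{..<n} = {..<m} \<union> {m..<n}" using assms by auto
  have "(\<Sum>d<n. f d) = (\<Sum>d<m. f d) + (\<Sum>d\<in>{m..<n}. f d)"
    unfolding u by (rule sum.union_disjoint) auto
  also have "(\<Sum>d<m. f d) = (\<Sum>d<Suc (m-1). f d)" using assms by simp
  also have "\<dots> = f 0 + (\<Sum>j<m-1. f (Suc j))" by (rule sum.lessThan_Suc_shift)
  finally show ?thesis .
qed

text \<open>The change of basis \<open>Q\<close>, with columns \<open>e\<^sub>0, \<phi>\<^sub>0, \<dots>, \<phi>\<^sub>m\<^sub>-\<^sub>2, e\<^sub>m, \<dots>, e\<^sub>n\<^sub>-\<^sub>1\<close>, and the matrix \<open>T\<close>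
  of \<open>Re A\<close> in this basis; \<open>\<mu> c\<close> holds the coefficients of column \<open>c\<close> of \<open>I - A\<close>.\<close>

definition Q_entry :: "nat \<Rightarrow> (nat \<Rightarrow> nat \<Rightarrow> real) \<Rightarrow> nat \<Rightarrow> nat \<Rightarrow> real" where
  "Q_entry m \<Phi> r c = (if c = 0 then (if r = 0 then 1 else 0) else if c < m then \<Phi> (c-1) r else (if r = c then 1 else 0))"

definition T_entry :: "nat \<Rightarrow> real \<Rightarrow> (nat \<Rightarrow> nat \<Rightarrow> complex) \<Rightarrow> nat \<Rightarrow> nat \<Rightarrow> real" where
  "T_entry m \<gamma> \<mu> d c = (if c = 1 then (if d = 0 then -(\<gamma>^2) * Re (\<mu> 0 0) else if d < m then \<gamma> * Im (\<mu> 0 (d-1)) else 0)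
      else if c < m \<and> c \<noteq> 0 then 0
      else (if d = c then 1 else 0) - (if d = 0 then \<gamma> * Im (\<mu> c 0) else if d < m then Re (\<mu> c (d-1)) else 0))"

locale row_annihilator =
  fixes n m :: nat and \<gamma> :: real and \<Phi> :: "nat \<Rightarrow> nat \<Rightarrow> real" and A :: "complex mat"
    and \<mu> :: "nat \<Rightarrow> nat \<Rightarrow> complex"
  assumes A: "A \<in> carrier_mat n n" and m2: "2 \<le> m" and mn: "m \<le> n"
    and compl_in_span: "\<And>c r. c < n \<Longrightarrow> r < n \<Longrightarrow>
      (if r = c then 1 else 0) - A $$ (r,c) = (\<Sum>j<m-1. \<mu> c j * s_entry \<gamma> \<Phi> j r)"
    and annihilates: "\<And>j r. j < m-1 \<Longrightarrow> r < n \<Longrightarrow> (\<Sum>c<n. A $$ (r,c) * s_entry \<gamma> \<Phi> j c) = 0"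
    and psd: "\<And>x. 0 \<le> Re (cinner n x (\<lambda>r. \<Sum>c<n. A $$ (r,c) * x c))"
begin

lemma Re_A: assumes "c < n" "r < n"
  shows "Re (A $$ (r,c)) = (if r = c then 1 else 0) - (if r = 0 then \<gamma> * Im (\<mu> c 0) else 0)
    - (\<Sum>j<m-1. Re (\<mu> c j) * \<Phi> j r)"
proof -
  have "A $$ (r,c) = (if r = c then 1 else 0) - (\<Sum>j<m-1. \<mu> c j * s_entry \<gamma> \<Phi> j r)"
    using compl_in_span[OF assms] by (simp add: algebra_simps)
  then have "Re (A $$ (r,c)) = (if r = c then 1 else 0) - (\<Sum>j<m-1. Re (\<mu> c j * s_entry \<gamma> \<Phi> j r))"
    by simp
  also have "(\<Sum>j<m-1. Re (\<mu> c j * s_entry \<gamma> \<Phi> j r))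
      = (\<Sum>j<m-1. Re (\<mu> c j) * \<Phi> j r) + (\<Sum>j<m-1. if j = 0 \<and> r = 0 then \<gamma> * Im (\<mu> c j) else 0)"
    unfolding Re_mult_s_entry sum.distrib ..
  also have "(\<Sum>j<m-1. if j = 0 \<and> r = 0 then \<gamma> * Im (\<mu> c j) else 0) = (if r = 0 then \<gamma> * Im (\<mu> c 0) else 0)"
    by (rule sum_if_first) (use m2 in auto)
  finally show ?thesis by simp
qed

lemma Im_A_col0: assumes "r < n"
  shows "Im (A $$ (r,0)) = (if r = 0 then \<gamma> * Re (\<mu> 0 0) else 0) - (\<Sum>j<m-1. Im (\<mu> 0 j) * \<Phi> j r)"
proof -
  have "A $$ (r,0) = (if r = 0 then 1 else 0) - (\<Sum>j<m-1. \<mu> 0 j * s_entry \<gamma> \<Phi> j r)"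
    using compl_in_span[of 0 r] assms by (simp add: algebra_simps)
  then have "Im (A $$ (r,0)) = - (\<Sum>j<m-1. Im (\<mu> 0 j * s_entry \<gamma> \<Phi> j r))"
    by simp
  also have "(\<Sum>j<m-1. Im (\<mu> 0 j * s_entry \<gamma> \<Phi> j r))
      = (\<Sum>j<m-1. Im (\<mu> 0 j) * \<Phi> j r) - (\<Sum>j<m-1. if j = 0 \<and> r = 0 then \<gamma> * Re (\<mu> 0 j) else 0)"
    unfolding Im_mult_s_entry sum_subtractf ..
  also have "(\<Sum>j<m-1. if j = 0 \<and> r = 0 then \<gamma> * Re (\<mu> 0 j) else 0) = (if r = 0 then \<gamma> * Re (\<mu> 0 0) else 0)"
    by (rule sum_if_first) (use m2 in auto)
  finally show ?thesis by simp
qed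

lemma Re_A_phi0: assumes "r < n"
  shows "(\<Sum>d<n. Re (A $$ (r,d)) * \<Phi> 0 d) = - \<gamma> * Im (A $$ (r,0))"
proof -
  have n0: "0 < n" using assms by simp
  have "0 = (\<Sum>d<n. A $$ (r,d) * s_entry \<gamma> \<Phi> 0 d)" using annihilates[of 0 r] m2 assms by simp
  also have "\<dots> = (\<Sum>d<n. A $$ (r,d) * complex_of_real (\<Phi> 0 d))
      - (\<Sum>d<n. if d = 0 then A $$ (r,d) * (\<i> * complex_of_real \<gamma>) else 0)"
    unfolding sum_subtractf[symmetric] by (intro sum.cong) (auto simp: s_entry_def algebra_simps)
  also have "(\<Sum>d<n. if d = 0 then A $$ (r,d) * (\<i> * complex_of_real \<gamma>) else 0) = A $$ (r,0) * (\<i> * complex_of_real \<gamma>)"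
    using n0 by simp
  finally have "(\<Sum>d<n. A $$ (r,d) * complex_of_real (\<Phi> 0 d)) = A $$ (r,0) * (\<i> * complex_of_real \<gamma>)"
    by simp
  then have "Re (\<Sum>d<n. A $$ (r,d) * complex_of_real (\<Phi> 0 d)) = Re (A $$ (r,0) * (\<i> * complex_of_real \<gamma>))"
    by simp
  then show ?thesis by (simp add: mult.commute)
qed

lemma Re_A_phi: assumes "1 \<le> j" "j < m - 1" "r < n"
  shows "(\<Sum>d<n. Re (A $$ (r,d)) * \<Phi> j d) = 0"
proof -
  have "0 = (\<Sum>d<n. A $$ (r,d) * s_entry \<gamma> \<Phi> j d)" using annihilates[of j r] assms by simp
  also have "\<dots> = (\<Sum>d<n. A $$ (r,d) * complex_of_real (\<Phi> j d))"
    by (intro sum.cong) (use assms in \<open>auto simp: s_entry_def\<close>)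
  finally have "Re (\<Sum>d<n. A $$ (r,d) * complex_of_real (\<Phi> j d)) = 0" by simp
  then show ?thesis by simp
qed

definition "M = map_mat Re A"
definition "Q = mat n n (\<lambda>(r,c). Q_entry m \<Phi> r c)"
definition "T = mat n n (\<lambda>(d,c). T_entry m \<gamma> \<mu> d c)"

lemma M_carrier: "M \<in> carrier_mat n n" and Q_carrier: "Q \<in> carrier_mat n n"
  and T_carrier: "T \<in> carrier_mat n n"
  using A by (auto simp: M_def Q_def T_def)

lemma MQ_entry: assumes "r < n" "c < n"
  shows "(M * Q) $$ (r,c) = (\<Sum>d<n. Re (A $$ (r,d)) * Q_entry m \<Phi> d c)"
  using assms A by (simp add: M_def Q_def scalar_prod_def atLeast0LessThan)

lemma QT_entry: assumes "r < n" "c < n"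
  shows "(Q * T) $$ (r,c) = (if r = 0 then 1 else 0) * T_entry m \<gamma> \<mu> 0 c
     + (\<Sum>j<m-1. \<Phi> j r * T_entry m \<gamma> \<mu> (Suc j) c)
     + (\<Sum>d\<in>{m..<n}. (if r = d then 1 else 0) * T_entry m \<gamma> \<mu> d c)"
proof -
  have "(Q * T) $$ (r,c) = (\<Sum>d<n. Q_entry m \<Phi> r d * T_entry m \<gamma> \<mu> d c)"
    using assms by (simp add: Q_def T_def scalar_prod_def atLeast0LessThan)
  also have "\<dots> = Q_entry m \<Phi> r 0 * T_entry m \<gamma> \<mu> 0 c
     + (\<Sum>j<m-1. Q_entry m \<Phi> r (Suc j) * T_entry m \<gamma> \<mu> (Suc j) c)
     + (\<Sum>d\<in>{m..<n}. Q_entry m \<Phi> r d * T_entry m \<gamma> \<mu> d c)"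
    by (rule sum_split_three) (use m2 mn in auto)
  also have "(\<Sum>j<m-1. Q_entry m \<Phi> r (Suc j) * T_entry m \<gamma> \<mu> (Suc j) c)
      = (\<Sum>j<m-1. \<Phi> j r * T_entry m \<gamma> \<mu> (Suc j) c)"
    by (intro sum.cong) (auto simp: Q_entry_def)
  also have "(\<Sum>d\<in>{m..<n}. Q_entry m \<Phi> r d * T_entry m \<gamma> \<mu> d c)
      = (\<Sum>d\<in>{m..<n}. (if r = d then 1 else 0) * T_entry m \<gamma> \<mu> d c)"
    using m2 by (intro sum.cong) (auto simp: Q_entry_def)
  finally show ?thesis by (simp add: Q_entry_def)
qed

text \<open>The identity \<open>M Q = Q T\<close>, column by column: the columns \<open>e\<^sub>c\<close> (\<open>c = 0\<close> or \<open>c \<ge> m\<close>) use the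
  expansion of \<open>I - A\<close>, the column \<open>\<phi>\<^sub>0\<close> uses \<open>A s\<^sub>0 = 0\<close>, the columns \<open>\<phi>\<^sub>j\<close> use \<open>A s\<^sub>j = 0\<close>.\<close>

lemma MQ_QT_unit_col:
  assumes r: "r < n" and c: "c < n" "c = 0 \<or> m \<le> c"
  shows "(M * Q) $$ (r,c) = (Q * T) $$ (r,c)"
proof -
  have m1: "Suc j < m" if "j < m - 1" for j using that m2 by arith
  have "(M * Q) $$ (r,c) = (\<Sum>d<n. Re (A $$ (r,d)) * (if d = c then 1 else 0))"
    unfolding MQ_entry[OF r c(1)] using c m2 by (intro sum.cong) (auto simp: Q_entry_def)
  also have "\<dots> = Re (A $$ (r,c))" by (rule sum_delta_right[OF c(1)])
  also have "\<dots> = (if r = c then 1 else 0) - (if r = 0 then \<gamma> * Im (\<mu> c 0) else 0)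
      - (\<Sum>j<m-1. Re (\<mu> c j) * \<Phi> j r)"
    using Re_A[OF c(1) r] .
  finally have L: "(M * Q) $$ (r,c) = \<dots>" .
  have s1: "(\<Sum>j<m-1. \<Phi> j r * T_entry m \<gamma> \<mu> (Suc j) c) = (\<Sum>j<m-1. - (Re (\<mu> c j) * \<Phi> j r))"
    by (intro sum.cong refl) (use m1 c m2 in \<open>auto simp: T_entry_def\<close>)
  have s2: "(\<Sum>d\<in>{m..<n}. (if r = d then 1 else 0) * T_entry m \<gamma> \<mu> d c) = (if r = c \<and> c \<noteq> 0 then 1 else 0)"
  proof (cases "c = 0")
    case True
    have "(\<Sum>d\<in>{m..<n}. (if r = d then 1 else 0) * T_entry m \<gamma> \<mu> d c) = 0"
      by (rule sum.neutral) (use True m2 in \<open>auto simp: T_entry_def\<close>)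
    with True show ?thesis by simp
  next
    case False
    then have "m \<le> c" using c by simp
    then have "(\<Sum>d\<in>{m..<n}. (if r = d then 1 else 0) * T_entry m \<gamma> \<mu> d c)
        = (if r = c then 1 else 0) * T_entry m \<gamma> \<mu> c c"
      by (intro sum_eq_single) (use c m2 in \<open>auto simp: T_entry_def\<close>)
    then show ?thesis using False \<open>m \<le> c\<close> m2 by (simp add: T_entry_def)
  qed
  have t0: "T_entry m \<gamma> \<mu> 0 c = (if c = 0 then 1 else 0) - \<gamma> * Im (\<mu> c 0)"
    using c m2 by (auto simp: T_entry_def)
  show ?thesis unfolding L QT_entry[OF r c(1)] s1 s2 t0 sum_negf
    by (cases "r = 0"; cases "r = c") auto
qed

lemma MQ_QT_phi0_col:
  assumes r: "r < n" and c: "c = 1"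
  shows "(M * Q) $$ (r,c) = (Q * T) $$ (r,c)"
proof -
  have m1: "Suc j < m" if "j < m - 1" for j using that m2 by arith
  have cn: "c < n" using c m2 mn by simp
  have "(M * Q) $$ (r,c) = (\<Sum>d<n. Re (A $$ (r,d)) * \<Phi> 0 d)"
    unfolding MQ_entry[OF r cn] using m2 c by (intro sum.cong) (auto simp: Q_entry_def)
  also have "\<dots> = - \<gamma> * Im (A $$ (r,0))" by (rule Re_A_phi0[OF r])
  also have "\<dots> = - \<gamma> * ((if r = 0 then \<gamma> * Re (\<mu> 0 0) else 0) - (\<Sum>j<m-1. Im (\<mu> 0 j) * \<Phi> j r))"
    using Im_A_col0[OF r] by simp
  finally have L: "(M * Q) $$ (r,c) = \<dots>" .
  have s1: "(\<Sum>j<m-1. \<Phi> j r * T_entry m \<gamma> \<mu> (Suc j) c) = (\<Sum>j<m-1. \<gamma> * (Im (\<mu> 0 j) * \<Phi> j r))"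
    by (intro sum.cong refl) (use m1 c in \<open>auto simp: T_entry_def\<close>)
  have s2: "(\<Sum>d\<in>{m..<n}. (if r = d then 1 else 0) * T_entry m \<gamma> \<mu> d c) = 0"
    by (rule sum.neutral) (use m2 c in \<open>auto simp: T_entry_def\<close>)
  have t0: "T_entry m \<gamma> \<mu> 0 c = -(\<gamma>^2) * Re (\<mu> 0 0)" using c by (simp add: T_entry_def)
  show ?thesis unfolding L QT_entry[OF r cn] s1 s2 t0 sum_distrib_left[symmetric]
    by (cases "r = 0") (auto simp: algebra_simps power2_eq_square)
qed

lemma MQ_QT_phi_col:
  assumes r: "r < n" and c: "2 \<le> c" "c < m"
  shows "(M * Q) $$ (r,c) = (Q * T) $$ (r,c)"
proof -
  have cn: "c < n" using c mn by simp
  have "(M * Q) $$ (r,c) = (\<Sum>d<n. Re (A $$ (r,d)) * \<Phi> (c-1) d)"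
    unfolding MQ_entry[OF r cn] using c by (intro sum.cong) (auto simp: Q_entry_def)
  also have "\<dots> = 0" by (rule Re_A_phi) (use c r in auto)
  finally have L: "(M * Q) $$ (r,c) = 0" .
  have "T_entry m \<gamma> \<mu> d c = 0" for d using c by (simp add: T_entry_def)
  then show ?thesis unfolding L QT_entry[OF r cn] by simp
qed

lemma MQ_QT: "M * Q = Q * T"
proof (rule eq_matI)
  fix r c assume "r < dim_row (Q * T)" and "c < dim_col (Q * T)"
  then have r: "r < n" and c: "c < n" by (auto simp: Q_def T_def)
  consider "c = 0 \<or> m \<le> c" | "c = 1" | "2 \<le> c \<and> c < m" by linarith
  then show "(M * Q) $$ (r,c) = (Q * T) $$ (r,c)"
  proof cases
    case 1
    then show ?thesis by (rule MQ_QT_unit_col[OF r c])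
  next
    case 2
    then show ?thesis by (rule MQ_QT_phi0_col[OF r])
  next
    case 3
    then show ?thesis using MQ_QT_phi_col[OF r] by blast
  qed
qed (use A in \<open>auto simp: M_def Q_def T_def\<close>)

lemma det_Q: "det Q = det (mat (m-1) (m-1) (\<lambda>(r,c). \<Phi> c (r+1)))"
proof -
  define Q1 where "Q1 = mat m m (\<lambda>(r,c). Q_entry m \<Phi> r c)"
  define Q3 where "Q3 = mat (n-m) m (\<lambda>(r,c). Q_entry m \<Phi> (r+m) c)"
  define R where "R = mat 1 (m-1) (\<lambda>(r,c). \<Phi> c 0)"
  define D where "D = mat (m-1) (m-1) (\<lambda>(r,c). \<Phi> c (r+1))"
  have shift: "\<And>i. \<not> i < 1 \<Longrightarrow> Suc (i - 1) = i" by arith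
  have QQ: "Q = four_block_mat Q1 (0\<^sub>m m (n-m)) Q3 (1\<^sub>m (n-m))"
    by (rule eq_matI) (use mn in \<open>auto simp: Q_def Q1_def Q3_def Q_entry_def\<close>)
  have Q11: "Q1 = four_block_mat (1\<^sub>m 1) R (0\<^sub>m (m-1) 1) D"
    by (rule eq_matI) (use m2 in \<open>auto simp: Q1_def R_def D_def Q_entry_def shift\<close>)
  have "det Q = det Q1 * det (1\<^sub>m (n-m) :: real mat)"
    unfolding QQ by (rule det_four_block_mat_upper_right_zero) (auto simp: Q1_def Q3_def)
  also have "det Q1 = det (1\<^sub>m 1 :: real mat) * det D"
    unfolding Q11 by (rule det_four_block_mat_lower_left_zero) (auto simp: R_def D_def)
  finally show ?thesis by (simp add: D_def)
qed

lemma char_poly_T: "\<exists>\<eta>. char_poly T = [:-1,1:] ^ (n-m) * [:0,1:] ^ (m-2) * ([:-\<eta>, 1:] * [:-(1-\<eta>), 1:])"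
proof (rule char_poly_block_trace_one[OF T_carrier m2 mn])
  have "T $$ (0,1) * T $$ (1,0) = (\<gamma> * Re (\<mu> 0 0))\<^sup>2"
    using m2 mn by (simp add: T_def T_entry_def power2_eq_square)
  then show "0 \<le> T $$ (0,1) * T $$ (1,0)" by simp
qed (use m2 mn in \<open>auto simp: T_def T_entry_def\<close>)

lemma M_psd: assumes v: "v \<in> carrier_vec n" shows "0 \<le> v \<bullet> (M *\<^sub>v v)"
proof -
  let ?x = "\<lambda>t. complex_of_real (v $ t)"
  have "v \<bullet> (M *\<^sub>v v) = (\<Sum>r<n. v $ r * (\<Sum>c<n. Re (A $$ (r,c)) * v $ c))"
    using v A by (simp add: M_def scalar_prod_def atLeast0LessThan)
  also have "\<dots> = Re (cinner n ?x (\<lambda>r. \<Sum>c<n. A $$ (r,c) * ?x c))"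
    by (simp add: cinner_def Re_sum sum_distrib_left)
  finally show ?thesis using psd[of ?x] by simp
qed

lemma eigenvalues_M:
  assumes minor: "det (mat (m-1) (m-1) (\<lambda>(r,c). \<Phi> c (r+1))) \<noteq> 0"
  shows "\<exists>\<eta>\<in>{0..1}. has_eigenvalues M (replicate_mset (n-m) 1 + replicate_mset (m-2) 0 + {#\<eta>, 1-\<eta>#})"
proof -
  have "char_poly M = char_poly T"
    by (rule intertwined_char_poly[OF M_carrier Q_carrier T_carrier _ MQ_QT]) (use minor det_Q in simp)
  with char_poly_T obtain \<eta>
    where eig: "has_eigenvalues M (replicate_mset (n-m) 1 + replicate_mset (m-2) 0 + {#\<eta>, 1-\<eta>#})"
    unfolding has_eigenvalues_pattern_iff by auto
  have "0 \<le> \<eta>" and "0 \<le> 1 - \<eta>"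
    by (rule psd_root_nonneg[OF M_carrier has_eigenvalues_root[OF eig] M_psd]; simp)+
  with eig show ?thesis by auto
qed

end


section \<open>The Gram-Schmidt projector of \<open>S\<close>\<close>

lemma gs_A_apply:
  assumes "r < dim_col S"
  shows "(\<Sum>c<dim_col S. gs_A S i $$ (r,c) * x c) = perp_part (dim_col S) (gs_vec S) (i-1) x r"
  unfolding gs_A_def by (rule gs_proj_apply[OF assms])

lemma gs_A_compl_in_row_span:
  assumes c: "c < dim_col S"
  shows "in_span (dim_col S) (\<lambda>l c. S $$ (l, c)) (i-1) (\<lambda>r. (if r = c then 1 else 0) - gs_A S i $$ (r,c))"
proof -
  define e where "e = (\<lambda>t. if t = c then (1::complex) else 0)"
  have A_col: "gs_A S i $$ (r,c) = perp_part (dim_col S) (gs_vec S) (i-1) e r" if "r < dim_col S" for r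
    using gs_A_apply[OF that, of i e] sum_delta_right[OF c, of "\<lambda>d. gs_A S i $$ (r,d)"]
    by (simp add: e_def)
  show ?thesis by (rule in_span_cong[OF gs_residual_in_row_span]) (simp add: e_def A_col)
qed

lemma gs_A_annihilates_rows:
  assumes "j < i - 1" "r < dim_col S"
  shows "(\<Sum>c<dim_col S. gs_A S i $$ (r,c) * S $$ (j, c)) = 0"
  unfolding gs_A_apply[OF assms(2)] using gs_residual_of_row[OF assms] .

lemma gs_A_psd: "0 \<le> Re (cinner (dim_col S) x (\<lambda>r. \<Sum>c<dim_col S. gs_A S i $$ (r,c) * x c))"
proof -
  have "cinner (dim_col S) x (\<lambda>r. \<Sum>c<dim_col S. gs_A S i $$ (r,c) * x c)
      = cinner (dim_col S) x (perp_part (dim_col S) (gs_vec S) (i-1) x)"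
    by (rule cinner_cong) (simp_all add: gs_A_apply)
  then show ?thesis using gs_residual_nonneg[of S x "i-1"] by simp
qed

lemma gs_A_row_annihilator:
  assumes i: "2 \<le> i" "i \<le> MR" and MRT: "MR \<le> MT"
  shows "\<exists>\<mu>. row_annihilator MT i (sqrt (real MT * real MR)) (\<lambda>a b. Phi (a, b)) (gs_A (S_mat MR MT Phi) i) \<mu>"
proof -
  define S where "S = S_mat MR MT Phi"
  define \<gamma> where "\<gamma> = sqrt (real MT * real MR)"
  define \<Phi> where "\<Phi> = (\<lambda>a b. Phi (a, b))"
  have dc: "dim_col S = MT" unfolding S_def by simp
  have S_entry: "S $$ (j, r) = s_entry \<gamma> \<Phi> j r" if "j < i - 1" "r < MT" for j r
    unfolding S_def \<gamma>_def \<Phi>_def using S_mat_entry that i by simp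
  have "\<forall>c\<in>{..<MT}. \<exists>\<beta>. \<forall>r<MT.
      (if r = c then 1 else 0) - gs_A S i $$ (r,c) = (\<Sum>j<i-1. \<beta> j * s_entry \<gamma> \<Phi> j r)"
    using gs_A_compl_in_row_span[of _ S i] unfolding in_span_def dc by (simp add: S_entry)
  then obtain \<mu> where \<mu>: "\<And>c r. c < MT \<Longrightarrow> r < MT \<Longrightarrow>
      (if r = c then 1 else 0) - gs_A S i $$ (r,c) = (\<Sum>j<i-1. \<mu> c j * s_entry \<gamma> \<Phi> j r)"
    by (metis bchoice lessThan_iff)
  have "(\<Sum>c<MT. gs_A S i $$ (r,c) * s_entry \<gamma> \<Phi> j c) = 0" if "j < i - 1" "r < MT" for j r
    using gs_A_annihilates_rows[of j i r S] that by (simp add: dc S_entry)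
  moreover have "gs_A S i \<in> carrier_mat MT MT"
    unfolding gs_A_def dc[symmetric] by auto
  ultimately have "row_annihilator MT i \<gamma> \<Phi> (gs_A S i) \<mu>"
    by unfold_locales (use i MRT \<mu> gs_A_psd[of S, unfolded dc] in auto)
  then show ?thesis unfolding S_def \<gamma>_def \<Phi>_def by blast
qed

lemma gs_A_eigenvalues:
  assumes i: "2 \<le> i" "i \<le> MR" and MRT: "MR \<le> MT"
    and minor: "det (mat (i-1) (i-1) (\<lambda>(r,c). Phi (c, r+1))) \<noteq> 0"
  shows "\<exists>\<eta>\<in>{0..1}. has_eigenvalues (Re_mat (gs_A (S_mat MR MT Phi) i))
           (replicate_mset (MT - i) 1 + replicate_mset (i - 2) 0 + {#\<eta>, 1 - \<eta>#})"
proof -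
  obtain \<mu> where "row_annihilator MT i (sqrt (real MT * real MR)) (\<lambda>a b. Phi (a, b)) (gs_A (S_mat MR MT Phi) i) \<mu>"
    using gs_A_row_annihilator[OF i MRT] by blast
  then interpret G: row_annihilator MT i "sqrt (real MT * real MR)" "\<lambda>a b. Phi (a, b)" "gs_A (S_mat MR MT Phi) i" \<mu> .
  show ?thesis using G.eigenvalues_M minor by (simp add: G.M_def Re_mat_def)
qed


section \<open>Almost sure invertibility of the minors of \<open>\<Phi>\<close>\<close>

lemma measurable_det:
  fixes f :: "'a \<Rightarrow> nat \<Rightarrow> nat \<Rightarrow> real"
  assumes "\<And>r c. r < k \<Longrightarrow> c < k \<Longrightarrow> (\<lambda>x. f x r c) \<in> borel_measurable N"
  shows "(\<lambda>x. det (mat k k (\<lambda>(r,c). f x r c))) \<in> borel_measurable N"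
proof -
  have det_eq: "det (mat k k (\<lambda>(r,c). f x r c))
      = (\<Sum>p\<in>{p. p permutes {0..<k}}. signof p * (\<Prod>i\<in>{0..<k}. f x i (p i)))" for x
  proof -
    have "det (mat k k (\<lambda>(r,c). f x r c))
        = (\<Sum>p\<in>{p. p permutes {0..<k}}. signof p * (\<Prod>i\<in>{0..<k}. mat k k (\<lambda>(r,c). f x r c) $$ (i, p i)))"
      by (rule det_def') simp
    also have "\<dots> = (\<Sum>p\<in>{p. p permutes {0..<k}}. signof p * (\<Prod>i\<in>{0..<k}. f x i (p i)))"
    proof (intro sum.cong refl arg_cong2[where f = "(*)"] prod.cong)
      fix p i assume "p \<in> {p. p permutes {0..<k}}" "i \<in> {0..<k}"
      then show "mat k k (\<lambda>(r,c). f x r c) $$ (i, p i) = f x i (p i)"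
        by (auto dest: permutes_in_image)
    qed
    finally show ?thesis .
  qed
  have "(\<lambda>x. signof p * (\<Prod>i\<in>{0..<k}. f x i (p i))) \<in> borel_measurable N" if "p permutes {0..<k}" for p
  proof -
    have "(\<lambda>x. \<Prod>i\<in>{0..<k}. f x i (p i)) \<in> borel_measurable N"
      by (rule borel_measurable_prod) (use assms that in \<open>auto dest: permutes_in_image\<close>)
    then show ?thesis by measurable
  qed
  then show ?thesis unfolding det_eq by (rule borel_measurable_sum) auto
qed

locale atomless_product =
  fixes N :: "real measure" and I :: "'i set"
  assumes sigma_finite: "sigma_finite_measure N" and space_N: "space N = UNIV"
    and sets_N: "sets N = sets borel" and atomless: "\<And>c. emeasure N {c} = 0"
    and finite_I: "finite I"
begin

abbreviation "P \<equiv> PiM I (\<lambda>_. N)"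

lemma component_measurable: "a \<in> I \<Longrightarrow> (\<lambda>x. x a) \<in> borel_measurable P"
  using measurable_component_singleton[of a I "\<lambda>_. N"] sets_N by (simp add: measurable_def)

text \<open>The event that one coordinate equals a measurable function of the other coordinates is
  null, by Fubini and atomlessness.\<close>

lemma graph_null:
  assumes a: "a \<in> I" and h: "h \<in> borel_measurable P"
    and indep: "\<And>x y. x \<in> space P \<Longrightarrow> h (x(a := y)) = h x"
  shows "{x \<in> space P. x a = h x} \<in> null_sets P"
proof -
  let ?S = "{x \<in> space P. x a = h x}"
  interpret ps: product_sigma_finite "\<lambda>_. N" by (simp add: product_sigma_finite_def sigma_finite)
  have S: "?S \<in> sets P" using component_measurable[OF a] h by measurable
  have II: "I = insert a (I - {a})" using a by auto
  have "emeasure P ?S = (\<integral>\<^sup>+ x. indicator ?S x \<partial>P)"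
    using S by simp
  also have "\<dots> = (\<integral>\<^sup>+ x. (\<integral>\<^sup>+ y. indicator ?S (x(a := y)) \<partial>N) \<partial>PiM (I - {a}) (\<lambda>_. N))"
    by (subst II, rule ps.product_nn_integral_insert) (use finite_I S II in auto)
  also have "\<dots> = (\<integral>\<^sup>+ x. 0 \<partial>PiM (I - {a}) (\<lambda>_. N))"
  proof (rule nn_integral_cong)
    fix x assume x: "x \<in> space (PiM (I - {a}) (\<lambda>_. N))"
    have xs: "x(a := y) \<in> space P" for y
      using x space_N a by (auto simp: space_PiM PiE_def extensional_def Pi_def)
    have "indicator ?S (x(a := y)) = (indicator {h (x(a := 0))} y :: ennreal)" for y
      using xs[of y] indep[OF xs[of 0], of y] by (auto simp: indicator_def)
    then have "(\<integral>\<^sup>+ y. indicator ?S (x(a := y)) \<partial>N) = emeasure N {h (x(a := 0))}"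
      by (simp add: sets_N)
    then show "(\<integral>\<^sup>+ y. indicator ?S (x(a := y)) \<partial>N) = 0" by (simp add: atomless)
  qed
  finally show ?thesis using S by (simp add: null_sets_def)
qed

end

lemma normal_atomless_product:
  assumes "0 < \<sigma>" "finite I"
  shows "atomless_product (density lborel (normal_density 0 \<sigma>)) I"
proof -
  let ?N = "density lborel (normal_density 0 \<sigma>)"
  interpret prob_space ?N using assms(1) by (rule prob_space_normal_density)
  have sf: "sigma_finite_measure ?N" by unfold_locales
  have "emeasure ?N {c} = 0" for c
  proof -
    have "emeasure ?N {c} = (\<integral>\<^sup>+ x. ennreal (normal_density 0 \<sigma> x) * indicator {c} x \<partial>lborel)"
      by (rule emeasure_density) auto
    also have "\<dots> = ennreal (normal_density 0 \<sigma> c) * emeasure lborel {c}"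
      by (rule nn_integral_indicator_singleton) simp
    finally show ?thesis by simp
  qed
  then show ?thesis using sf assms(2) by (intro atomless_product.intro) simp_all
qed

text \<open>The leading minors: \<open>minor_mat k x\<close> has entries \<open>x (c, r + 1)\<close>, i.e. it is the transpose of
  the block of \<open>\<Phi>\<close> on rows \<open>0, \<dots>, k - 1\<close> and columns \<open>1, \<dots>, k\<close>.\<close>

definition minor_mat :: "nat \<Rightarrow> (nat \<times> nat \<Rightarrow> real) \<Rightarrow> real mat" where
  "minor_mat k x = mat k k (\<lambda>(r,c). x (c, r+1))"

lemma det_minor_mat_0: "det (minor_mat 0 x) = 1"
proof -
  have "minor_mat 0 x = 1\<^sub>m 0" by (rule eq_matI) (auto simp: minor_mat_def)
  then show ?thesis by simp
qed

lemma mat_delete_minor_mat: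
  assumes "r < Suc k"
  shows "mat_delete (minor_mat (Suc k) x) r k = mat k k (\<lambda>(i,j). x (j, (if i < r then i else Suc i) + 1))"
  by (rule eq_matI) (auto simp: mat_delete_def minor_mat_def)

text \<open>Laplace expansion along the last column: the entry \<open>x (k, k + 1)\<close> enters linearly with
  coefficient \<open>det (minor_mat k x)\<close>, and no other term depends on it.\<close>

lemma laplace_minor_mat:
  "det (minor_mat (Suc k) x)
     = (\<Sum>r<k. x (k, r+1) * cofactor (minor_mat (Suc k) x) r k) + x (k, Suc k) * det (minor_mat k x)"
proof -
  have last: "cofactor (minor_mat (Suc k) x) k k = det (minor_mat k x)"
  proof -
    have "mat_delete (minor_mat (Suc k) x) k k = minor_mat k x"
      by (rule eq_matI) (auto simp: mat_delete_def minor_mat_def)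
    moreover have "(-1::real) ^ (k + k) = 1" by (simp add: mult_2[symmetric] power_mult)
    ultimately show ?thesis unfolding cofactor_def by simp
  qed
  have "det (minor_mat (Suc k) x)
      = (\<Sum>r<Suc k. minor_mat (Suc k) x $$ (r,k) * cofactor (minor_mat (Suc k) x) r k)"
    by (rule laplace_expansion_column) (auto simp: minor_mat_def)
  also have "\<dots> = (\<Sum>r<k. x (k, r+1) * cofactor (minor_mat (Suc k) x) r k)
      + x (k, Suc k) * cofactor (minor_mat (Suc k) x) k k"
    by (simp add: minor_mat_def)
  finally show ?thesis unfolding last .
qed

text \<open>The value \<open>x (k, k + 1)\<close> must take for the \<open>(k + 1)\<close>-minor to vanish.\<close>

definition minor_pivot :: "nat \<Rightarrow> (nat \<times> nat \<Rightarrow> real) \<Rightarrow> real" where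
  "minor_pivot k x = - (\<Sum>r<k. x (k, r+1) * cofactor (minor_mat (Suc k) x) r k) / det (minor_mat k x)"

lemma minor_pivot_eq:
  assumes "det (minor_mat k x) \<noteq> 0" "det (minor_mat (Suc k) x) = 0"
  shows "x (k, Suc k) = minor_pivot k x"
  using assms laplace_minor_mat[of k x] unfolding minor_pivot_def by (simp add: field_simps)

lemma minor_pivot_update: "minor_pivot k (x((k, Suc k) := y)) = minor_pivot k x"
proof -
  have d: "minor_mat k (x((k, Suc k) := y)) = minor_mat k x"
    by (rule eq_matI) (auto simp: minor_mat_def)
  have c: "cofactor (minor_mat (Suc k) (x((k, Suc k) := y))) r k = cofactor (minor_mat (Suc k) x) r k"
    if "r < k" for r
    unfolding cofactor_def using that
    by (simp add: mat_delete_minor_mat) (intro arg_cong[where f = det] eq_matI, auto)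
  show ?thesis unfolding minor_pivot_def d by (simp add: c)
qed

lemma minor_pivot_measurable:
  fixes I :: "(nat \<times> nat) set"
  assumes "atomless_product N I" and I: "{..k} \<times> {..Suc k} \<subseteq> I"
  shows "minor_pivot k \<in> borel_measurable (PiM I (\<lambda>_. N))"
proof -
  interpret atomless_product N I by fact
  have comp: "(\<lambda>x. x (a, b)) \<in> borel_measurable P" if "a \<le> k" "b \<le> Suc k" for a b
    using component_measurable I that by blast
  have det: "(\<lambda>x. det (minor_mat k x)) \<in> borel_measurable P"
    unfolding minor_mat_def by (rule measurable_det) (rule comp, auto)
  have cof: "(\<lambda>x. cofactor (minor_mat (Suc k) x) r k) \<in> borel_measurable P" if r: "r < k" for r
  proof -
    have "(\<lambda>x. det (mat k k (\<lambda>(i,j). x (j, (if i < r then i else Suc i) + 1)))) \<in> borel_measurable P"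
      by (rule measurable_det) (rule comp, auto)
    then show ?thesis unfolding cofactor_def using r by (simp add: mat_delete_minor_mat)
  qed
  have "(\<lambda>x. \<Sum>r<k. x (k, r+1) * cofactor (minor_mat (Suc k) x) r k) \<in> borel_measurable P"
    by (rule borel_measurable_sum) (use comp cof in auto)
  then show ?thesis unfolding minor_pivot_def[abs_def] using det by measurable
qed

lemma AE_minor_step:
  fixes I :: "(nat \<times> nat) set"
  assumes N: "atomless_product N I" and I: "{..k} \<times> {..Suc k} \<subseteq> I"
  shows "AE x in PiM I (\<lambda>_. N). det (minor_mat k x) \<noteq> 0 \<longrightarrow> det (minor_mat (Suc k) x) \<noteq> 0"
proof -
  interpret atomless_product N I by fact
  have "{x \<in> space P. x (k, Suc k) = minor_pivot k x} \<in> null_sets P"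
    by (rule graph_null) (use I minor_pivot_measurable[OF N I] minor_pivot_update in auto)
  then show ?thesis by (rule AE_I') (auto intro: minor_pivot_eq)
qed

lemma AE_minors:
  fixes I :: "(nat \<times> nat) set"
  assumes N: "atomless_product N I" and I: "{..<MR} \<times> {..<MT} \<subseteq> I" and MRT: "MR \<le> MT"
  shows "AE x in PiM I (\<lambda>_. N). \<forall>k\<in>{1..MR-1}. det (minor_mat k x) \<noteq> 0"
proof -
  have "AE x in PiM I (\<lambda>_. N). det (minor_mat k x) \<noteq> 0" if "k \<le> MR - 1" for k
    using that
  proof (induction k)
    case 0
    then show ?case by (simp add: det_minor_mat_0)
  next
    case (Suc k)
    have "{..k} \<times> {..Suc k} \<subseteq> I" using I MRT Suc.prems by auto
    with Suc show ?case using AE_minor_step[OF N] by (auto elim: AE_mp)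
  qed
  then show ?thesis by (subst AE_finite_all) auto
qed


theorem lemma5:
  fixes MR MT :: nat and \<sigma> :: real
  assumes "2 \<le> MR" and "MR \<le> MT" and "\<sigma> > 0"
  shows "AE Phi in PiM ({..<MR} \<times> {..<MT}) (\<lambda>_. density lborel (normal_density 0 \<sigma>)).
           \<forall>i\<in>{2..MR}. \<exists>\<eta>\<in>{0..1}.
             has_eigenvalues (Re_mat (gs_A (S_mat MR MT Phi) i))
               (replicate_mset (MT - i) 1 + replicate_mset (i - 2) 0 + {#\<eta>, 1 - \<eta>#})"
proof -
  have "atomless_product (density lborel (normal_density 0 \<sigma>)) ({..<MR} \<times> {..<MT})"
    using assms(3) by (rule normal_atomless_product) simp
  from AE_minors[OF this order_refl assms(2)]
  show ?thesis
  proof (rule eventually_mono, intro ballI)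
    fix Phi i
    assume minors: "\<forall>k\<in>{1..MR-1}. det (minor_mat k Phi) \<noteq> 0" and i: "i \<in> {2..MR}"
    then have "i - 1 \<in> {1..MR-1}" by auto
    with minors have "det (minor_mat (i - 1) Phi) \<noteq> 0" by blast
    then show "\<exists>\<eta>\<in>{0..1}. has_eigenvalues (Re_mat (gs_A (S_mat MR MT Phi) i))
        (replicate_mset (MT - i) 1 + replicate_mset (i - 2) 0 + {#\<eta>, 1 - \<eta>#})"
      using gs_A_eigenvalues[of i MR MT Phi] i assms(2) by (simp add: minor_mat_def)
  qed
qed

end
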